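(* Let $\sigma\in(0,1]$, let $x_1<\dots<x_N$, $J=[x_1,x_N]$, $T=\{1,\dots,N-1\}$, and let $f,b\in\mathcal{H}^\sigma(J)$ and $\alpha_k\in\mathcal{H}^\sigma(J)$ for all $k\in T$, with $b(x_1)=f(x_1)$, $b(x_N)=f(x_N)$, $b\neq f$ and $\max_{t\in J}|\alpha_k(t)|<1$ for each $k$. Let $c=\min\{a_k:k\in T\}$. If $\|\alpha\|_{\mathcal{H}}/c^\sigma<1$, then the $\alpha$-fractal function $f^\alpha$ is Hölder continuous with exponent $\sigma$.
   Context: $\mathcal{H}^\sigma(J)$ is the space of functions $h:J\to\mathbb{C}$ that are Hölder continuous with exponent $\sigma$, with norm $\|h\|_{\mathcal{H}}=\|h\|_\infty+[h]_\sigma$, $[h]_\sigma=\sup_{t_1\ne t_2}|h(t_1)-h(t_2)|/|t_1-t_2|^\sigma$. For the scaling vector $\alpha=(\alpha_1,\dots,\alpha_{N-1})$: $\|\alpha\|_\infty=\max_{k\in T}\sup_{t\in J}|\alpha_k(t)|$, $[\alpha]_\sigma=\max_{k\in T}\sup_{t_1\ne t_2\in J}|\alpha_k(t_1)-\alpha_k(t_2)|/|t_1-t_2|^\sigma$, $\|\alpha\|_{\mathcal{H}}=\|\alpha\|_\infty+[\alpha]_\sigma$. Construction: $J_k=[x_k,x_{k+1}]$, $P_k(t)=a_kt+d_k$ with $P_k(x_1)=x_k$, $P_k(x_N)=x_{k+1}$ (so $a_k=(x_{k+1}-x_k)/(x_N-x_1)$). The $\alpha$-fractal function $f^\alpha:J\to\mathbb{C}$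 is the unique continuous function whose graph is the attractor of the IFS $\{J\times\mathbb{C};W_k(t,y)=(P_k(t),\alpha_k(t)y+f(P_k(t))-\alpha_k(t)b(t)),\ k\in T\}$; equivalently it is the continuous function satisfying $f^\alpha(t)=f(t)+\alpha_k(P_k^{-1}(t))\,(f^\alpha-b)(P_k^{-1}(t))$ for $t\in J_k$, $k\in T$. *)

theory Defs
  imports "HOL-Analysis.Analysis"
begin

definition holder_on :: "real \<Rightarrow> real set \<Rightarrow> (real \<Rightarrow> 'a::real_normed_vector) \<Rightarrow> bool" where
  "holder_on \<sigma> J h \<longleftrightarrow>
     (\<exists>C. \<forall>t1\<in>J. \<forall>t2\<in>J. norm (h t1 - h t2) \<le> C * \<bar>t1 - t2\<bar> powr \<sigma>)"

definition holder_seminorm :: "real \<Rightarrow> real set \<Rightarrow> (real \<Rightarrow> 'a::real_normed_vector) \<Rightarrow> real" where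
  "holder_seminorm \<sigma> J h =
     (SUP p\<in>{(t1,t2). t1 \<in> J \<and> t2 \<in> J \<and> t1 \<noteq> t2}.
        norm (h (fst p) - h (snd p)) / \<bar>fst p - snd p\<bar> powr \<sigma>)"

definition sup_norm_on :: "real set \<Rightarrow> (real \<Rightarrow> 'a::real_normed_vector) \<Rightarrow> real" where
  "sup_norm_on J h = (SUP t\<in>J. norm (h t))"

definition Jint :: "nat \<Rightarrow> (nat \<Rightarrow> real) \<Rightarrow> real set" where
  "Jint N x = {x 1 .. x N}"

definition Tset :: "nat \<Rightarrow> nat set" where
  "Tset N = {1..<N}"

text \<open>P_k(t) = a_k t + d_k with P_k(x_1) = x_k, P_k(x_N) = x_(k+1).\<close>
definition a_coef :: "nat \<Rightarrow> (nat \<Rightarrow> real) \<Rightarrow> nat \<Rightarrow> real" where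
  "a_coef N x k = (x (Suc k) - x k) / (x N - x 1)"

definition d_coef :: "nat \<Rightarrow> (nat \<Rightarrow> real) \<Rightarrow> nat \<Rightarrow> real" where
  "d_coef N x k = x k - a_coef N x k * x 1"

definition P_map :: "nat \<Rightarrow> (nat \<Rightarrow> real) \<Rightarrow> nat \<Rightarrow> real \<Rightarrow> real" where
  "P_map N x k t = a_coef N x k * t + d_coef N x k"

definition P_inv :: "nat \<Rightarrow> (nat \<Rightarrow> real) \<Rightarrow> nat \<Rightarrow> real \<Rightarrow> real" where
  "P_inv N x k t = (t - d_coef N x k) / a_coef N x k"

definition alpha_sup_norm :: "nat \<Rightarrow> (nat \<Rightarrow> real) \<Rightarrow> (nat \<Rightarrow> real \<Rightarrow> complex) \<Rightarrow> real" where
  "alpha_sup_norm N x \<alpha> = Max ((\<lambda>k. sup_norm_on (Jint N x) (\<alpha> k)) ` Tset N)"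

definition alpha_holder_seminorm :: "real \<Rightarrow> nat \<Rightarrow> (nat \<Rightarrow> real) \<Rightarrow> (nat \<Rightarrow> real \<Rightarrow> complex) \<Rightarrow> real" where
  "alpha_holder_seminorm \<sigma> N x \<alpha> = Max ((\<lambda>k. holder_seminorm \<sigma> (Jint N x) (\<alpha> k)) ` Tset N)"

definition alpha_holder_norm :: "real \<Rightarrow> nat \<Rightarrow> (nat \<Rightarrow> real) \<Rightarrow> (nat \<Rightarrow> real \<Rightarrow> complex) \<Rightarrow> real" where
  "alpha_holder_norm \<sigma> N x \<alpha> = alpha_sup_norm N x \<alpha> + alpha_holder_seminorm \<sigma> N x \<alpha>"

definition fractal_eq :: "nat \<Rightarrow> (nat \<Rightarrow> real) \<Rightarrow> (nat \<Rightarrow> real \<Rightarrow> complex) \<Rightarrow>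
    (real \<Rightarrow> complex) \<Rightarrow> (real \<Rightarrow> complex) \<Rightarrow> (real \<Rightarrow> complex) \<Rightarrow> bool" where
  "fractal_eq N x \<alpha> f b h \<longleftrightarrow>
     (\<forall>k\<in>Tset N. \<forall>t\<in>{x k .. x (Suc k)}.
        h t = f t + \<alpha> k (P_inv N x k t) * (h (P_inv N x k t) - b (P_inv N x k t)))"

text \<open>The alpha-fractal function f^alpha: the unique continuous function on J satisfying
  the fixed point equation (extended by 0 outside J so that it is a unique HOL function).\<close>
definition fractal_function :: "nat \<Rightarrow> (nat \<Rightarrow> real) \<Rightarrow> (nat \<Rightarrow> real \<Rightarrow> complex) \<Rightarrow>
    (real \<Rightarrow> complex) \<Rightarrow> (real \<Rightarrow> complex) \<Rightarrow> (real \<Rightarrow> complex)" where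
  "fractal_function N x \<alpha> f b =
     (THE h. continuous_on (Jint N x) h \<and> fractal_eq N x \<alpha> f b h \<and>
             (\<forall>t. t \<notin> Jint N x \<longrightarrow> h t = 0))"

end

theory Submission
  imports Defs
begin

text \<open>The fractal function is the fixed point of the Read-Bajraktarevic operator
  \<open>(T g) t = f t + \<alpha>\<^sub>k (P\<^sub>k\<^sup>-\<^sup>1 t) * (g - b) (P\<^sub>k\<^sup>-\<^sup>1 t)\<close> on the \<open>k\<close>-th piece \<open>[x\<^sub>k, x\<^sub>k\<^sub>+\<^sub>1]\<close>.
  In the sup norm \<open>T\<close> contracts by \<open>A = max\<^sub>k sup |\<alpha>\<^sub>k| < 1\<close>, so the iterates \<open>T\<^sup>n b\<close>
  converge geometrically. Since \<open>P\<^sub>k\<^sup>-\<^sup>1\<close> stretches distances by \<open>1 / a\<^sub>k \<le> 1 / c\<close>, \<open>T\<close> turns a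
  Hoelder constant \<open>L\<close> of \<open>g\<close> into \<open>K + q L\<close> with \<open>q = A / c\<^sup>\<sigma> < 1\<close>, as long as both points
  lie in one piece. For points in different pieces one passes through the nodes in between,
  where \<open>T g = f\<close>; this needs only a Hoelder bound \<open>E\<close> of \<open>g\<close> towards \<open>x\<^sub>1\<close> and \<open>x\<^sub>N\<close>,
  which \<open>T\<close> turns into \<open>K' + q E\<close>. So all iterates share one Hoelder constant, and so does
  their limit.\<close>

section \<open>Hoelder continuous functions\<close>

lemma holder_on_nonneg_constant:
  assumes "holder_on \<sigma> J g"
  obtains C where "C \<ge> 0" "\<forall>t1\<in>J. \<forall>t2\<in>J. norm (g t1 - g t2) \<le> C * \<bar>t1 - t2\<bar> powr \<sigma>"
proof -
  obtain C where C: "\<forall>t1\<in>J. \<forall>t2\<in>J. norm (g t1 - g t2) \<le> C * \<bar>t1 - t2\<bar> powr \<sigma>"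
    using assms unfolding holder_on_def by blast
  have "norm (g t1 - g t2) \<le> \<bar>C\<bar> * \<bar>t1 - t2\<bar> powr \<sigma>" if "t1 \<in> J" "t2 \<in> J" for t1 t2
  proof -
    have "norm (g t1 - g t2) \<le> C * \<bar>t1 - t2\<bar> powr \<sigma>" using C that by blast
    also have "\<dots> \<le> \<bar>C\<bar> * \<bar>t1 - t2\<bar> powr \<sigma>" by (intro mult_right_mono) auto
    finally show ?thesis .
  qed
  then show thesis by (intro that[of "\<bar>C\<bar>"]) auto
qed

lemma holder_on_uniform_constant:
  assumes "finite K" "\<And>k. k \<in> K \<Longrightarrow> holder_on \<sigma> J (g k)"
  obtains C where "C \<ge> 0"
    "\<forall>k\<in>K. \<forall>t1\<in>J. \<forall>t2\<in>J. norm (g k t1 - g k t2) \<le> C * \<bar>t1 - t2\<bar> powr \<sigma>"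
proof -
  have "\<forall>k\<in>K. \<exists>C. \<forall>t1\<in>J. \<forall>t2\<in>J. norm (g k t1 - g k t2) \<le> C * \<bar>t1 - t2\<bar> powr \<sigma>"
    using assms(2) unfolding holder_on_def by blast
  from bchoice[OF this] obtain C
    where C: "\<forall>k\<in>K. \<forall>t1\<in>J. \<forall>t2\<in>J. norm (g k t1 - g k t2) \<le> C k * \<bar>t1 - t2\<bar> powr \<sigma>"
    by blast
  have "norm (g k t1 - g k t2) \<le> (\<Sum>k\<in>K. \<bar>C k\<bar>) * \<bar>t1 - t2\<bar> powr \<sigma>"
    if "k \<in> K" "t1 \<in> J" "t2 \<in> J" for k t1 t2
  proof -
    have "norm (g k t1 - g k t2) \<le> C k * \<bar>t1 - t2\<bar> powr \<sigma>" using C that by blast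
    also have "\<dots> \<le> (\<Sum>k\<in>K. \<bar>C k\<bar>) * \<bar>t1 - t2\<bar> powr \<sigma>"
      using assms(1) that(1) member_le_sum[of k K "\<lambda>k. \<bar>C k\<bar>"]
      by (intro mult_right_mono) auto
    finally show ?thesis .
  qed
  then show thesis by (intro that[of "\<Sum>k\<in>K. \<bar>C k\<bar>"] sum_nonneg) auto
qed

lemma holder_on_imp_continuous_on:
  assumes "holder_on \<sigma> J g" "0 < \<sigma>"
  shows "continuous_on J g"
  unfolding continuous_on_iff
proof (intro ballI allI impI)
  fix t e :: real assume t: "t \<in> J" and e: "0 < e"
  obtain C where C0: "C \<ge> 0"
    and C: "\<forall>t1\<in>J. \<forall>t2\<in>J. norm (g t1 - g t2) \<le> C * \<bar>t1 - t2\<bar> powr \<sigma>"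
    using holder_on_nonneg_constant[OF assms(1)] by blast
  define d where "d = (e / (C + 1)) powr (1 / \<sigma>)"
  have "d > 0" using e C0 by (simp add: d_def)
  moreover have "dist (g s) (g t) < e" if s: "s \<in> J" "dist s t < d" for s
  proof -
    have "\<bar>s - t\<bar> powr \<sigma> < d powr \<sigma>"
      using s(2) assms(2) by (intro powr_less_mono2) (auto simp: dist_real_def)
    also have "\<dots> = e / (C + 1)" using e C0 assms(2) by (simp add: d_def powr_powr)
    finally have "(C + 1) * \<bar>s - t\<bar> powr \<sigma> < e" using C0 by (simp add: field_simps)
    moreover have "dist (g s) (g t) \<le> (C + 1) * \<bar>s - t\<bar> powr \<sigma>"
      using C s(1) t by (simp add: dist_norm distrib_right add_increasing2)
    ultimately show ?thesis by linarith
  qed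
  ultimately show "\<exists>d>0. \<forall>s\<in>J. dist s t < d \<longrightarrow> dist (g s) (g t) < e" by blast
qed

lemma norm_le_sup_norm_on:
  assumes "continuous_on J h" "compact J" "t \<in> J"
  shows "norm (h t) \<le> sup_norm_on J h"
proof -
  have "bounded (h ` J)" by (intro compact_imp_bounded compact_continuous_image assms(1,2))
  then have "bdd_above ((\<lambda>t. norm (h t)) ` J)" by (simp add: bounded_imp_bdd_above bounded_norm_comp)
  then show ?thesis unfolding sup_norm_on_def using assms(3) by (rule cSUP_upper[rotated])
qed

lemma holder_seminorm_nonneg:
  assumes "holder_on \<sigma> J h" "s \<in> J" "t \<in> J" "s \<noteq> t"
  shows "0 \<le> holder_seminorm \<sigma> J h"
proof -
  let ?S = "{(t1, t2). t1 \<in> J \<and> t2 \<in> J \<and> t1 \<noteq> t2}"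
  let ?q = "\<lambda>p. norm (h (fst p) - h (snd p)) / \<bar>fst p - snd p\<bar> powr \<sigma>"
  obtain C where C: "\<forall>t1\<in>J. \<forall>t2\<in>J. norm (h t1 - h t2) \<le> C * \<bar>t1 - t2\<bar> powr \<sigma>"
    using assms(1) unfolding holder_on_def by blast
  have "?q p \<le> C" if "p \<in> ?S" for p
    using C that by (auto simp: pos_divide_le_eq)
  then have "bdd_above (?q ` ?S)" by (intro bdd_aboveI2)
  moreover have "(s, t) \<in> ?S" using assms(2-4) by simp
  ultimately have "?q (s, t) \<le> holder_seminorm \<sigma> J h"
    unfolding holder_seminorm_def by (intro cSUP_upper)
  moreover have "0 \<le> ?q (s, t)" by simp
  ultimately show ?thesis by linarith
qed

lemma geometric_steps_imp_convergent:
  fixes s :: "nat \<Rightarrow> 'a::banach"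
  assumes "\<And>n. norm (s (Suc n) - s n) \<le> A ^ n * R" "0 \<le> A" "A < 1"
  shows "convergent s"
proof -
  have "summable (\<lambda>n. A ^ n * R)" using assms(2,3) by (intro summable_mult2 summable_geometric) auto
  then have "summable (\<lambda>n. s (Suc n) - s n)" using assms(1) by (rule summable_comparison_test')
  then have "convergent (\<lambda>n. \<Sum>i<n. s (Suc i) - s i)" by (simp add: summable_iff_convergent)
  then have "convergent (\<lambda>n. (s n - s 0) + s 0)"
    unfolding sum_lessThan_telescope by (intro convergent_add convergent_const)
  then show ?thesis by simp
qed

lemma norm_add3_le:
  fixes a b c :: "'a::real_normed_vector"
  shows "norm (a + b + c) \<le> norm a + norm b + norm c"
  using norm_triangle_ineq[of "a + b" c] norm_triangle_ineq[of a b] by linarith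

section \<open>The nodes and the affine maps of the pieces\<close>

locale ordered_nodes =
  fixes N :: nat and x :: "nat \<Rightarrow> real"
  assumes two_le_N: "2 \<le> N"
    and nodes_strict_mono: "\<And>i j. 1 \<le> i \<Longrightarrow> i < j \<Longrightarrow> j \<le> N \<Longrightarrow> x i < x j"
begin

abbreviation "J \<equiv> Jint N x"
abbreviation "T \<equiv> Tset N"

lemma nodes_mono: "1 \<le> i \<Longrightarrow> i \<le> j \<Longrightarrow> j \<le> N \<Longrightarrow> x i \<le> x j"
  using nodes_strict_mono[of i j] by (cases "i = j") auto

lemma first_lt_last: "x 1 < x N"
  using nodes_strict_mono[of 1 N] two_le_N by auto

lemma endpoints_in_J: "x 1 \<in> J" "x N \<in> J"
  using first_lt_last by (auto simp: Jint_def)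

lemma compact_J: "compact J"
  by (simp add: Jint_def)

lemma Tset_bounds: "k \<in> T \<Longrightarrow> 1 \<le> k \<and> Suc k \<le> N"
  by (auto simp: Tset_def)

lemma finite_T: "finite T"
  by (simp add: Tset_def)

lemma first_and_last_in_T: "1 \<in> T" "N - 1 \<in> T"
  using two_le_N by (auto simp: Tset_def)

lemma a_coef_pos: "k \<in> T \<Longrightarrow> 0 < a_coef N x k"
  using nodes_strict_mono[of k "Suc k"] first_lt_last Tset_bounds[of k] by (auto simp: a_coef_def)

lemma Min_a_coef_pos: "0 < Min (a_coef N x ` T)"
  using finite_T first_and_last_in_T a_coef_pos by (subst Min_gr_iff) auto

lemma Min_a_coef_le: "k \<in> T \<Longrightarrow> Min (a_coef N x ` T) \<le> a_coef N x k"
  using finite_T by simp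

lemma P_inv_left_node: "k \<in> T \<Longrightarrow> P_inv N x k (x k) = x 1"
  using a_coef_pos[of k] by (simp add: P_inv_def d_coef_def)

lemma P_inv_right_node:
  assumes "k \<in> T"
  shows "P_inv N x k (x (Suc k)) = x N"
proof -
  have "P_inv N x k (x (Suc k)) = (x (Suc k) - x k) / a_coef N x k + x 1"
    using a_coef_pos[OF assms] by (simp add: P_inv_def d_coef_def field_simps)
  also have "(x (Suc k) - x k) / a_coef N x k = x N - x 1"
    using first_lt_last nodes_strict_mono[of k "Suc k"] Tset_bounds[OF assms] by (simp add: a_coef_def)
  finally show ?thesis by simp
qed

lemma abs_P_inv_diff: "k \<in> T \<Longrightarrow> \<bar>P_inv N x k t1 - P_inv N x k t2\<bar> = \<bar>t1 - t2\<bar> / a_coef N x k"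
  using a_coef_pos[of k] by (simp add: P_inv_def diff_divide_distrib[symmetric])

lemma P_inv_mono: "k \<in> T \<Longrightarrow> t1 \<le> t2 \<Longrightarrow> P_inv N x k t1 \<le> P_inv N x k t2"
  using a_coef_pos[of k] by (simp add: P_inv_def divide_right_mono)

lemma P_inv_in_J: "k \<in> T \<Longrightarrow> t \<in> {x k .. x (Suc k)} \<Longrightarrow> P_inv N x k t \<in> J"
  using P_inv_mono[of k "x k" t] P_inv_mono[of k t "x (Suc k)"] P_inv_left_node P_inv_right_node
  by (auto simp: Jint_def)

lemma piece_subset_J: "k \<in> T \<Longrightarrow> {x k .. x (Suc k)} \<subseteq> J"
  using nodes_mono[of 1 k] nodes_mono[of "Suc k" N] Tset_bounds[of k] by (auto simp: Jint_def)

lemma pieces_cover_J: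
  assumes "t \<in> J"
  shows "\<exists>k\<in>T. t \<in> {x k .. x (Suc k)}"
proof -
  have "\<exists>k. 1 \<le> k \<and> k < m \<and> t \<in> {x k .. x (Suc k)}"
    if "2 \<le> m" "m \<le> N" "x 1 \<le> t" "t \<le> x m" for m
    using that
  proof (induction m rule: nat_induct_at_least)
    case base
    then show ?case by (intro exI[of _ 1]) (auto simp: numeral_2_eq_2)
  next
    case (Suc m)
    show ?case
    proof (cases "t \<le> x m")
      case True
      with Suc show ?thesis by force
    next
      case False
      with Suc show ?thesis by (intro exI[of _ m]) auto
    qed
  qed
  from this[of N] show ?thesis using assms two_le_N by (auto simp: Jint_def Tset_def)
qed

lemma pieces_meet_at_node:
  "k \<in> T \<Longrightarrow> k' \<in> T \<Longrightarrow> k < k' \<Longrightarrow> t \<in> {x k .. x (Suc k)} \<Longrightarrow> t \<in> {x k' .. x (Suc k')}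
    \<Longrightarrow> t = x (Suc k) \<and> t = x k'"
  using nodes_mono[of "Suc k" k'] Tset_bounds[of k] Tset_bounds[of k'] by auto

definition piece_index :: "real \<Rightarrow> nat" where
  "piece_index t = (SOME k. k \<in> T \<and> t \<in> {x k .. x (Suc k)})"

lemma piece_index: "t \<in> J \<Longrightarrow> piece_index t \<in> T \<and> t \<in> {x (piece_index t) .. x (Suc (piece_index t))}"
  unfolding piece_index_def using pieces_cover_J by (rule someI2_bex) auto

lemma norm_le_alpha_sup_norm:
  assumes "\<And>k. k \<in> T \<Longrightarrow> continuous_on J (\<alpha> k)" "k \<in> T" "t \<in> J"
  shows "norm (\<alpha> k t) \<le> alpha_sup_norm N x \<alpha>"
proof -
  have "norm (\<alpha> k t) \<le> sup_norm_on J (\<alpha> k)"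
    using assms compact_J by (intro norm_le_sup_norm_on) auto
  also have "\<dots> \<le> alpha_sup_norm N x \<alpha>"
    unfolding alpha_sup_norm_def using finite_T assms(2) by simp
  finally show ?thesis .
qed

lemma alpha_sup_norm_lt_1:
  assumes "\<And>k. k \<in> T \<Longrightarrow> sup_norm_on J (\<alpha> k) < 1"
  shows "alpha_sup_norm N x \<alpha> < 1"
  unfolding alpha_sup_norm_def using finite_T first_and_last_in_T assms by (subst Max_less_iff) auto

lemma alpha_sup_norm_le_alpha_holder_norm:
  assumes "k \<in> T" "holder_on \<sigma> J (\<alpha> k)"
  shows "alpha_sup_norm N x \<alpha> \<le> alpha_holder_norm \<sigma> N x \<alpha>"
proof -
  have "0 \<le> holder_seminorm \<sigma> J (\<alpha> k)"
    using holder_seminorm_nonneg[OF assms(2) endpoints_in_J] first_lt_last by simp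
  also have "\<dots> \<le> alpha_holder_seminorm \<sigma> N x \<alpha>"
    unfolding alpha_holder_seminorm_def using finite_T assms(1) by simp
  finally show ?thesis by (simp add: alpha_holder_norm_def)
qed

end

section \<open>The Read-Bajraktarevic operator\<close>

locale fractal_setting = ordered_nodes +
  fixes \<sigma> :: real and f b :: "real \<Rightarrow> complex" and \<alpha> :: "nat \<Rightarrow> real \<Rightarrow> complex"
    and A c Cf Cb C\<alpha> :: real
  assumes sigma_pos: "0 < \<sigma>"
    and f_holder: "0 \<le> Cf" "\<And>t1 t2. t1 \<in> J \<Longrightarrow> t2 \<in> J \<Longrightarrow> norm (f t1 - f t2) \<le> Cf * \<bar>t1 - t2\<bar> powr \<sigma>"
    and b_holder: "0 \<le> Cb" "\<And>t1 t2. t1 \<in> J \<Longrightarrow> t2 \<in> J \<Longrightarrow> norm (b t1 - b t2) \<le> Cb * \<bar>t1 - t2\<bar> powr \<sigma>"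
    and alpha_holder: "0 \<le> C\<alpha>"
      "\<And>k t1 t2. k \<in> T \<Longrightarrow> t1 \<in> J \<Longrightarrow> t2 \<in> J \<Longrightarrow> norm (\<alpha> k t1 - \<alpha> k t2) \<le> C\<alpha> * \<bar>t1 - t2\<bar> powr \<sigma>"
    and alpha_bound: "0 \<le> A" "A < 1" "\<And>k t. k \<in> T \<Longrightarrow> t \<in> J \<Longrightarrow> norm (\<alpha> k t) \<le> A"
    and a_coef_bound: "0 < c" "\<And>k. k \<in> T \<Longrightarrow> c \<le> a_coef N x k"
    and contraction: "A / c powr \<sigma> < 1"
    and b_left: "b (x 1) = f (x 1)"
    and b_right: "b (x N) = f (x N)"
begin

abbreviation "q \<equiv> A / c powr \<sigma>"

lemma q_nonneg: "0 \<le> q"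
  using alpha_bound(1) by simp

lemma dist_P_inv_powr_le:
  assumes "k \<in> T"
  shows "\<bar>P_inv N x k t1 - P_inv N x k t2\<bar> powr \<sigma> \<le> \<bar>t1 - t2\<bar> powr \<sigma> / c powr \<sigma>"
proof -
  have "\<bar>P_inv N x k t1 - P_inv N x k t2\<bar> powr \<sigma> = \<bar>t1 - t2\<bar> powr \<sigma> / a_coef N x k powr \<sigma>"
    using abs_P_inv_diff[OF assms] by (simp add: powr_divide)
  also have "\<dots> \<le> \<bar>t1 - t2\<bar> powr \<sigma> / c powr \<sigma>"
    using a_coef_bound assms a_coef_pos[OF assms] sigma_pos by (intro divide_left_mono powr_mono2 mult_pos_pos) auto
  finally show ?thesis .
qed

text \<open>Chosen so that \<open>sup |f - b| + A * radius = radius\<close>, which makes the ball of this radius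
  around \<open>b\<close> invariant under the operator below.\<close>

definition radius :: real where
  "radius = sup_norm_on J (\<lambda>t. f t - b t) / (1 - A)"

lemma norm_f_minus_b_le:
  assumes "t \<in> J"
  shows "norm (f t - b t) \<le> (1 - A) * radius"
proof -
  have "holder_on \<sigma> J f" "holder_on \<sigma> J b"
    using f_holder b_holder unfolding holder_on_def by blast+
  then have "continuous_on J (\<lambda>t. f t - b t)"
    using sigma_pos by (intro continuous_on_diff holder_on_imp_continuous_on)
  then show ?thesis
    using norm_le_sup_norm_on compact_J assms alpha_bound(2) by (simp add: radius_def)
qed

lemma radius_nonneg: "0 \<le> radius"
proof -
  have "0 \<le> (1 - A) * radius"
    using norm_f_minus_b_le[OF endpoints_in_J(1)] by (rule order_trans[OF norm_ge_zero])
  then show ?thesis using alpha_bound(2) by (simp add: zero_le_mult_iff)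
qed

text \<open>At a node shared by two pieces \<open>piece_index\<close> may pick
  either piece; this is harmless for functions that agree with \<open>b\<close> at \<open>x 1\<close> and \<open>x N\<close>.\<close>

definition rb_branch :: "(real \<Rightarrow> complex) \<Rightarrow> nat \<Rightarrow> real \<Rightarrow> complex" where
  "rb_branch g k t = f t + \<alpha> k (P_inv N x k t) * (g (P_inv N x k t) - b (P_inv N x k t))"

definition rb_operator :: "(real \<Rightarrow> complex) \<Rightarrow> real \<Rightarrow> complex" where
  "rb_operator g t = rb_branch g (piece_index t) t"

definition ends_on_b :: "(real \<Rightarrow> complex) \<Rightarrow> bool" where
  "ends_on_b g \<longleftrightarrow> g (x 1) = b (x 1) \<and> g (x N) = b (x N)"

definition near_b :: "(real \<Rightarrow> complex) \<Rightarrow> bool" where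
  "near_b g \<longleftrightarrow> (\<forall>t\<in>J. norm (g t - b t) \<le> radius)"

definition holder_at_ends :: "real \<Rightarrow> (real \<Rightarrow> complex) \<Rightarrow> bool" where
  "holder_at_ends E g \<longleftrightarrow> (\<forall>t\<in>J. norm (g t - g (x 1)) \<le> E * \<bar>t - x 1\<bar> powr \<sigma> \<and>
                                   norm (g t - g (x N)) \<le> E * \<bar>t - x N\<bar> powr \<sigma>)"

definition holder_with :: "real \<Rightarrow> (real \<Rightarrow> complex) \<Rightarrow> bool" where
  "holder_with L g \<longleftrightarrow> (\<forall>t1\<in>J. \<forall>t2\<in>J. norm (g t1 - g t2) \<le> L * \<bar>t1 - t2\<bar> powr \<sigma>)"

lemma holder_at_ends_mono: "holder_at_ends E g \<Longrightarrow> E \<le> E' \<Longrightarrow> holder_at_ends E' g"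
  unfolding holder_at_ends_def by (meson order_trans mult_right_mono powr_ge_zero)

lemma holder_with_mono: "holder_with L g \<Longrightarrow> L \<le> L' \<Longrightarrow> holder_with L' g"
  unfolding holder_with_def by (meson order_trans mult_right_mono powr_ge_zero)

lemma rb_branch_at_node:
  "ends_on_b g \<Longrightarrow> k \<in> T \<Longrightarrow> t = x k \<or> t = x (Suc k) \<Longrightarrow> rb_branch g k t = f t"
  unfolding rb_branch_def ends_on_b_def using P_inv_left_node[of k] P_inv_right_node[of k] by auto

lemma rb_operator_eq:
  assumes g: "ends_on_b g" and k: "k \<in> T" "t \<in> {x k .. x (Suc k)}"
  shows "rb_operator g t = rb_branch g k t"
proof -
  define k' where "k' = piece_index t"
  have k': "k' \<in> T" "t \<in> {x k' .. x (Suc k')}"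
    using piece_index piece_subset_J k unfolding k'_def by blast+
  consider "k' = k" | "k' < k" | "k < k'" by linarith
  then have "rb_branch g k' t = rb_branch g k t"
  proof cases
    case 2
    with pieces_meet_at_node[OF k'(1) k(1)] k k' rb_branch_at_node[OF g] show ?thesis by metis
  next
    case 3
    with pieces_meet_at_node[OF k(1) k'(1)] k k' rb_branch_at_node[OF g] show ?thesis by metis
  qed simp
  then show ?thesis by (simp add: rb_operator_def k'_def)
qed

lemma rb_operator_at_ends:
  assumes "ends_on_b g"
  shows "rb_operator g (x 1) = f (x 1)" "rb_operator g (x N) = f (x N)"
proof -
  note first = first_and_last_in_T(1) and last = first_and_last_in_T(2)
  have "Suc (N - 1) = N" using two_le_N by simp
  then show "rb_operator g (x N) = f (x N)"
    using rb_operator_eq[OF assms last, of "x N"] rb_branch_at_node[OF assms last, of "x N"]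
      nodes_mono[of "N - 1" N] two_le_N by simp
  show "rb_operator g (x 1) = f (x 1)"
    using rb_operator_eq[OF assms first, of "x 1"] rb_branch_at_node[OF assms first, of "x 1"]
      nodes_mono[of 1 2] two_le_N by (simp add: numeral_2_eq_2)
qed

lemma ends_on_b_rb_operator: "ends_on_b g \<Longrightarrow> ends_on_b (rb_operator g)"
  using rb_operator_at_ends b_left b_right by (simp add: ends_on_b_def)

lemma near_b_rb_operator:
  assumes "near_b g"
  shows "near_b (rb_operator g)"
  unfolding near_b_def
proof
  fix t assume t: "t \<in> J"
  define k where "k = piece_index t"
  define s where "s = P_inv N x k t"
  have k: "k \<in> T" "t \<in> {x k .. x (Suc k)}" using piece_index[OF t] by (auto simp: k_def)
  have s: "s \<in> J" using P_inv_in_J[OF k] by (simp add: s_def)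
  have "rb_operator g t - b t = (f t - b t) + \<alpha> k s * (g s - b s)"
    by (simp add: rb_operator_def rb_branch_def k_def s_def)
  moreover have "norm (\<alpha> k s * (g s - b s)) \<le> A * radius"
    unfolding norm_mult using alpha_bound(1) alpha_bound(3)[OF k(1) s] assms s
    by (intro mult_mono) (auto simp: near_b_def)
  ultimately have "norm (rb_operator g t - b t) \<le> (1 - A) * radius + A * radius"
    using norm_f_minus_b_le[OF t] by (metis add_mono norm_triangle_le)
  then show "norm (rb_operator g t - b t) \<le> radius" by (simp add: algebra_simps)
qed

text \<open>\<open>P_inv N x k\<close> maps the nodes of the \<open>k\<close>-th piece to \<open>x 1\<close> and \<open>x N\<close>, where \<open>g - b\<close> vanishes.\<close>

lemma rb_branch_dist_f_le:
  assumes g: "ends_on_b g" "holder_at_ends E g" "0 \<le> E" and k: "k \<in> T" "t \<in> {x k .. x (Suc k)}"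
    and e: "e = x k \<or> e = x (Suc k)"
  shows "norm (rb_branch g k t - f t) \<le> q * (E + Cb) * \<bar>t - e\<bar> powr \<sigma>"
proof -
  define s where "s = P_inv N x k t"
  define e' where "e' = P_inv N x k e"
  have s: "s \<in> J" using P_inv_in_J[OF k] by (simp add: s_def)
  have e': "e' = x 1 \<or> e' = x N"
    using e P_inv_left_node[OF k(1)] P_inv_right_node[OF k(1)] by (auto simp: e'_def)
  then have "e' \<in> J" "g e' = b e'" using endpoints_in_J g(1) by (auto simp: ends_on_b_def)
  then have eq: "rb_branch g k t - f t = \<alpha> k s * ((g s - g e') - (b s - b e'))"
    by (simp add: rb_branch_def s_def)
  have "norm (g s - g e') \<le> E * \<bar>s - e'\<bar> powr \<sigma>"
    using g(2) s e' unfolding holder_at_ends_def by auto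
  then have "norm ((g s - g e') - (b s - b e')) \<le> E * \<bar>s - e'\<bar> powr \<sigma> + Cb * \<bar>s - e'\<bar> powr \<sigma>"
    using b_holder(2)[OF s \<open>e' \<in> J\<close>] by (meson add_mono norm_triangle_ineq4 order_trans)
  also have "\<dots> = (E + Cb) * \<bar>s - e'\<bar> powr \<sigma>" by (simp add: algebra_simps)
  also have "\<dots> \<le> (E + Cb) * (\<bar>t - e\<bar> powr \<sigma> / c powr \<sigma>)"
    using dist_P_inv_powr_le[OF k(1)] g(3) b_holder(1) by (intro mult_left_mono) (auto simp: s_def e'_def)
  finally have "norm (rb_branch g k t - f t) \<le> A * ((E + Cb) * (\<bar>t - e\<bar> powr \<sigma> / c powr \<sigma>))"
    unfolding eq norm_mult using alpha_bound(1) alpha_bound(3)[OF k(1) s] by (intro mult_mono) auto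
  then show ?thesis by simp
qed

lemma holder_at_ends_rb_operator:
  assumes g: "ends_on_b g" "holder_at_ends E g" "0 \<le> E"
  shows "holder_at_ends (Cf + q * (E + Cb)) (rb_operator g)"
  unfolding holder_at_ends_def
proof (intro ballI conjI)
  fix t assume t: "t \<in> J"
  define k where "k = piece_index t"
  have k: "k \<in> T" "t \<in> {x k .. x (Suc k)}" using piece_index[OF t] by (auto simp: k_def)
  have bound: "norm (rb_operator g t - rb_operator g e) \<le> (Cf + q * (E + Cb)) * \<bar>t - e\<bar> powr \<sigma>"
    if e: "e = x 1 \<or> e = x N" and n: "n = x k \<or> n = x (Suc k)" and closer: "\<bar>t - n\<bar> \<le> \<bar>t - e\<bar>"
    for e n
  proof -
    have eq: "rb_operator g t - rb_operator g e = (f t - f e) + (rb_branch g k t - f t)"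
      using rb_operator_at_ends[OF g(1)] e by (auto simp: rb_operator_def k_def)
    have "norm (f t - f e) \<le> Cf * \<bar>t - e\<bar> powr \<sigma>"
      using f_holder(2)[OF t] endpoints_in_J e by auto
    moreover have "q * (E + Cb) * \<bar>t - n\<bar> powr \<sigma> \<le> q * (E + Cb) * \<bar>t - e\<bar> powr \<sigma>"
      using closer mult_nonneg_nonneg[OF q_nonneg, of "E + Cb"] g(3) b_holder(1) sigma_pos
      by (intro mult_left_mono powr_mono2) auto
    ultimately have "norm (rb_operator g t - rb_operator g e)
        \<le> Cf * \<bar>t - e\<bar> powr \<sigma> + q * (E + Cb) * \<bar>t - e\<bar> powr \<sigma>"
      unfolding eq using rb_branch_dist_f_le[OF g k n]
      by (intro norm_triangle_le add_mono) auto
    then show ?thesis by (simp add: algebra_simps)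
  qed
  show "norm (rb_operator g t - rb_operator g (x 1)) \<le> (Cf + q * (E + Cb)) * \<bar>t - x 1\<bar> powr \<sigma>"
    using bound[of "x 1" "x k"] k nodes_mono[of 1 k] Tset_bounds[of k] by auto
  show "norm (rb_operator g t - rb_operator g (x N)) \<le> (Cf + q * (E + Cb)) * \<bar>t - x N\<bar> powr \<sigma>"
    using bound[of "x N" "x (Suc k)"] k t nodes_mono[of "Suc k" N] Tset_bounds[of k]
    by (auto simp: Jint_def)
qed

lemma rb_branch_holder_same_piece:
  assumes g: "near_b g" "holder_with L g" "0 \<le> L"
    and k: "k \<in> T" and t: "t1 \<in> {x k .. x (Suc k)}" "t2 \<in> {x k .. x (Suc k)}"
  shows "norm (rb_branch g k t1 - rb_branch g k t2)
    \<le> (Cf + (C\<alpha> * radius + A * Cb) / c powr \<sigma> + q * L) * \<bar>t1 - t2\<bar> powr \<sigma>"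
proof -
  define s1 where "s1 = P_inv N x k t1"
  define s2 where "s2 = P_inv N x k t2"
  define D where "D = \<bar>t1 - t2\<bar> powr \<sigma>"
  define Ds where "Ds = \<bar>s1 - s2\<bar> powr \<sigma>"
  have s: "s1 \<in> J" "s2 \<in> J" using P_inv_in_J[OF k] t by (auto simp: s1_def s2_def)
  have "t1 \<in> J" "t2 \<in> J" using piece_subset_J[OF k] t by auto
  then have n1: "norm (f t1 - f t2) \<le> Cf * D" using f_holder(2) by (simp add: D_def)
  have n2: "norm ((\<alpha> k s1 - \<alpha> k s2) * (g s1 - b s1)) \<le> (C\<alpha> * Ds) * radius"
    unfolding norm_mult using alpha_holder(1) alpha_holder(2)[OF k s] g(1) s(1) unfolding near_b_def Ds_def
    by (intro mult_mono) auto
  have "norm ((g s1 - g s2) - (b s1 - b s2)) \<le> L * Ds + Cb * Ds"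
    using g(2) s b_holder(2)[OF s] unfolding holder_with_def Ds_def
    by (meson add_mono norm_triangle_ineq4 order_trans)
  then have n3: "norm (\<alpha> k s2 * ((g s1 - g s2) - (b s1 - b s2))) \<le> A * (L * Ds + Cb * Ds)"
    unfolding norm_mult using alpha_bound(1) alpha_bound(3)[OF k s(2)] by (intro mult_mono) auto
  have "rb_branch g k t1 - rb_branch g k t2 = (f t1 - f t2) + (\<alpha> k s1 - \<alpha> k s2) * (g s1 - b s1)
      + \<alpha> k s2 * ((g s1 - g s2) - (b s1 - b s2))"
    by (simp add: rb_branch_def s1_def s2_def algebra_simps)
  then have "norm (rb_branch g k t1 - rb_branch g k t2) \<le> norm (f t1 - f t2)
      + norm ((\<alpha> k s1 - \<alpha> k s2) * (g s1 - b s1)) + norm (\<alpha> k s2 * ((g s1 - g s2) - (b s1 - b s2)))"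
    by (simp only: norm_add3_le)
  also have "\<dots> \<le> Cf * D + (C\<alpha> * Ds) * radius + A * (L * Ds + Cb * Ds)"
    using n1 n2 n3 by (intro add_mono)
  also have "\<dots> = Cf * D + (C\<alpha> * radius + A * (L + Cb)) * Ds" by (simp add: algebra_simps)
  also have "\<dots> \<le> Cf * D + (C\<alpha> * radius + A * (L + Cb)) * (D / c powr \<sigma>)"
    using dist_P_inv_powr_le[OF k] alpha_holder(1) radius_nonneg alpha_bound(1) g(3) b_holder(1)
    by (intro add_left_mono mult_left_mono) (auto simp: Ds_def D_def s1_def s2_def)
  also have "\<dots> = (Cf + (C\<alpha> * radius + A * Cb) / c powr \<sigma> + q * L) * D"
    using a_coef_bound(1) by (simp add: field_simps)
  finally show ?thesis by (simp add: D_def)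
qed

lemma rb_branch_holder_across_pieces:
  assumes g: "ends_on_b g" "holder_at_ends E g" "0 \<le> E" and k: "k1 \<in> T" "k2 \<in> T" "k1 < k2"
    and t1: "t1 \<in> {x k1 .. x (Suc k1)}" and t2: "t2 \<in> {x k2 .. x (Suc k2)}"
  shows "norm (rb_branch g k1 t1 - rb_branch g k2 t2) \<le> (Cf + 2 * q * (E + Cb)) * \<bar>t1 - t2\<bar> powr \<sigma>"
proof -
  have "t1 \<in> J" "t2 \<in> J" using piece_subset_J k t1 t2 by blast+
  then have nf: "norm (f t1 - f t2) \<le> Cf * \<bar>t1 - t2\<bar> powr \<sigma>" using f_holder(2) by blast
  have between: "t1 \<le> x (Suc k1)" "x (Suc k1) \<le> x k2" "x k2 \<le> t2"
    using nodes_mono[of "Suc k1" k2] k Tset_bounds[of k1] Tset_bounds[of k2] t1 t2 by auto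
  have "q * (E + Cb) * \<bar>t - e\<bar> powr \<sigma> \<le> q * (E + Cb) * \<bar>t1 - t2\<bar> powr \<sigma>"
    if "\<bar>t - e\<bar> \<le> \<bar>t1 - t2\<bar>" for t e
    using that mult_nonneg_nonneg[OF q_nonneg, of "E + Cb"] g(3) b_holder(1) sigma_pos
    by (intro mult_left_mono powr_mono2) auto
  moreover have "\<bar>t1 - x (Suc k1)\<bar> \<le> \<bar>t1 - t2\<bar>" "\<bar>t2 - x k2\<bar> \<le> \<bar>t1 - t2\<bar>"
    using between by auto
  ultimately have n1: "norm (rb_branch g k1 t1 - f t1) \<le> q * (E + Cb) * \<bar>t1 - t2\<bar> powr \<sigma>"
    and n2: "norm (rb_branch g k2 t2 - f t2) \<le> q * (E + Cb) * \<bar>t1 - t2\<bar> powr \<sigma>"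
    using rb_branch_dist_f_le[OF g k(1) t1, of "x (Suc k1)"] rb_branch_dist_f_le[OF g k(2) t2, of "x k2"]
    by (meson order_trans)+
  have "rb_branch g k1 t1 - rb_branch g k2 t2
      = (f t1 - f t2) + (rb_branch g k1 t1 - f t1) + - (rb_branch g k2 t2 - f t2)"
    by simp
  then have "norm (rb_branch g k1 t1 - rb_branch g k2 t2)
      \<le> norm (f t1 - f t2) + norm (rb_branch g k1 t1 - f t1) + norm (rb_branch g k2 t2 - f t2)"
    using norm_add3_le by (metis norm_minus_cancel)
  also have "\<dots> \<le> Cf * \<bar>t1 - t2\<bar> powr \<sigma> + q * (E + Cb) * \<bar>t1 - t2\<bar> powr \<sigma>
      + q * (E + Cb) * \<bar>t1 - t2\<bar> powr \<sigma>"
    using nf n1 n2 by (intro add_mono)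
  finally show ?thesis by (simp add: algebra_simps)
qed

lemma holder_with_rb_operator:
  assumes g: "ends_on_b g" "near_b g" "holder_at_ends E g" "holder_with L g" "0 \<le> E" "0 \<le> L"
  shows "holder_with (max (Cf + 2 * q * (E + Cb)) (Cf + (C\<alpha> * radius + A * Cb) / c powr \<sigma> + q * L))
    (rb_operator g)"
  unfolding holder_with_def
proof (intro ballI)
  fix t1 t2 assume t: "t1 \<in> J" "t2 \<in> J"
  define M where "M = max (Cf + 2 * q * (E + Cb)) (Cf + (C\<alpha> * radius + A * Cb) / c powr \<sigma> + q * L)"
  define k1 where "k1 = piece_index t1"
  define k2 where "k2 = piece_index t2"
  have k1: "k1 \<in> T" "t1 \<in> {x k1 .. x (Suc k1)}" using piece_index[OF t(1)] by (auto simp: k1_def)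
  have k2: "k2 \<in> T" "t2 \<in> {x k2 .. x (Suc k2)}" using piece_index[OF t(2)] by (auto simp: k2_def)
  have M: "Cf + 2 * q * (E + Cb) \<le> M" "Cf + (C\<alpha> * radius + A * Cb) / c powr \<sigma> + q * L \<le> M"
    by (simp_all add: M_def)
  have across: "norm (rb_branch g i s - rb_branch g j u) \<le> M * \<bar>s - u\<bar> powr \<sigma>"
    if "i \<in> T" "j \<in> T" "i < j" "s \<in> {x i .. x (Suc i)}" "u \<in> {x j .. x (Suc j)}" for i j s u
    using rb_branch_holder_across_pieces[OF g(1,3,5) that] mult_right_mono[OF M(1) powr_ge_zero]
    by (rule order_trans)
  have "norm (rb_branch g k1 t1 - rb_branch g k2 t2) \<le> M * \<bar>t1 - t2\<bar> powr \<sigma>"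
  proof (cases k1 k2 rule: linorder_cases)
    case less
    show ?thesis using across[OF k1(1) k2(1) less k1(2) k2(2)] .
  next
    case equal
    then show ?thesis
      using rb_branch_holder_same_piece[OF g(2,4,6) k1, of t2] k2 mult_right_mono[OF M(2) powr_ge_zero]
      by (simp add: order_trans)
  next
    case greater
    then show ?thesis using across[OF k2(1) k1(1) greater k2(2) k1(2)]
      by (simp add: norm_minus_commute abs_minus_commute)
  qed
  then show "norm (rb_operator g t1 - rb_operator g t2) \<le> M * \<bar>t1 - t2\<bar> powr \<sigma>"
    by (simp add: rb_operator_def k1_def k2_def)
qed

text \<open>Each constant dominates \<open>Cb\<close>, the Hoelder constant of the starting function \<open>b\<close>, and the
  fixed point of the corresponding affine bound (slope \<open>q < 1\<close>) of the last two lemmas.\<close>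

definition end_const :: real where
  "end_const = max Cb ((Cf + q * Cb) / (1 - q))"

definition holder_const :: real where
  "holder_const = max Cb (max (Cf + 2 * q * (end_const + Cb))
                             ((Cf + (C\<alpha> * radius + A * Cb) / c powr \<sigma>) / (1 - q)))"

lemma end_const_bounds: "Cb \<le> end_const" "Cf + q * (end_const + Cb) \<le> end_const"
proof -
  show "Cb \<le> end_const" by (simp add: end_const_def)
  have "(Cf + q * Cb) / (1 - q) \<le> end_const" by (simp add: end_const_def)
  then have "Cf + q * Cb \<le> end_const * (1 - q)" using contraction by (simp add: pos_divide_le_eq)
  then show "Cf + q * (end_const + Cb) \<le> end_const" by (simp add: algebra_simps)
qed

lemma holder_const_bounds:
  "Cb \<le> holder_const"
  "max (Cf + 2 * q * (end_const + Cb)) (Cf + (C\<alpha> * radius + A * Cb) / c powr \<sigma> + q * holder_const)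
     \<le> holder_const"
proof -
  show "Cb \<le> holder_const" by (simp add: holder_const_def)
  have "(Cf + (C\<alpha> * radius + A * Cb) / c powr \<sigma>) / (1 - q) \<le> holder_const"
    by (simp add: holder_const_def)
  then have "Cf + (C\<alpha> * radius + A * Cb) / c powr \<sigma> + q * holder_const \<le> holder_const"
    using contraction by (simp add: pos_divide_le_eq algebra_simps)
  moreover have "Cf + 2 * q * (end_const + Cb) \<le> holder_const" by (simp add: holder_const_def)
  ultimately show "max (Cf + 2 * q * (end_const + Cb))
      (Cf + (C\<alpha> * radius + A * Cb) / c powr \<sigma> + q * holder_const) \<le> holder_const"
    by simp
qed

section \<open>The fractal function as the limit of the iterates\<close>

definition rb_iterate :: "nat \<Rightarrow> real \<Rightarrow> complex" where
  "rb_iterate n = (rb_operator ^^ n) b"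

lemma rb_iterate_invariants:
  "ends_on_b (rb_iterate n) \<and> near_b (rb_iterate n) \<and>
   holder_at_ends end_const (rb_iterate n) \<and> holder_with holder_const (rb_iterate n)"
proof (induction n)
  case 0
  have "holder_at_ends Cb b" "holder_with Cb b"
    using b_holder(2) endpoints_in_J by (auto simp: holder_at_ends_def holder_with_def)
  then show ?case
    using holder_at_ends_mono holder_with_mono end_const_bounds(1) holder_const_bounds(1)
      radius_nonneg by (auto simp: rb_iterate_def ends_on_b_def near_b_def)
next
  case (Suc n)
  have "0 \<le> end_const" "0 \<le> holder_const"
    using b_holder(1) end_const_bounds(1) holder_const_bounds(1) by linarith+
  then show ?case
    using Suc ends_on_b_rb_operator near_b_rb_operator
      holder_at_ends_rb_operator[of "rb_iterate n" end_const]
      holder_with_rb_operator[of "rb_iterate n" end_const holder_const]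
      end_const_bounds holder_const_bounds holder_at_ends_mono holder_with_mono
    by (simp add: rb_iterate_def)
qed

lemma norm_rb_iterate_step_le: "t \<in> J \<Longrightarrow> norm (rb_iterate (Suc n) t - rb_iterate n t) \<le> A ^ n * radius"
proof (induction n arbitrary: t)
  case 0
  then show ?case using rb_iterate_invariants[of 1] by (simp add: rb_iterate_def near_b_def)
next
  case (Suc n)
  define k where "k = piece_index t"
  define s where "s = P_inv N x k t"
  have k: "k \<in> T" "t \<in> {x k .. x (Suc k)}" using piece_index[OF Suc.prems] by (auto simp: k_def)
  have s: "s \<in> J" using P_inv_in_J[OF k] by (simp add: s_def)
  have "rb_iterate (Suc (Suc n)) t - rb_iterate (Suc n) t = \<alpha> k s * (rb_iterate (Suc n) s - rb_iterate n s)"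
    by (simp add: rb_iterate_def rb_operator_def rb_branch_def k_def s_def algebra_simps)
  also have "norm \<dots> \<le> A * (A ^ n * radius)"
    unfolding norm_mult using alpha_bound(1) alpha_bound(3)[OF k(1) s] Suc.IH[OF s]
    by (intro mult_mono) auto
  finally show ?case by simp
qed

definition fractal_limit :: "real \<Rightarrow> complex" where
  "fractal_limit t = (if t \<in> J then lim (\<lambda>n. rb_iterate n t) else 0)"

lemma rb_iterate_tendsto:
  assumes "t \<in> J"
  shows "(\<lambda>n. rb_iterate n t) \<longlonglongrightarrow> fractal_limit t"
proof -
  have "convergent (\<lambda>n. rb_iterate n t)"
    using norm_rb_iterate_step_le[OF assms] alpha_bound(1,2) by (rule geometric_steps_imp_convergent)
  then show ?thesis using assms by (simp add: fractal_limit_def convergent_LIMSEQ_iff)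
qed

lemma holder_with_fractal_limit: "holder_with holder_const fractal_limit"
  unfolding holder_with_def
proof (intro ballI)
  fix t1 t2 assume t: "t1 \<in> J" "t2 \<in> J"
  have "(\<lambda>n. norm (rb_iterate n t1 - rb_iterate n t2)) \<longlonglongrightarrow> norm (fractal_limit t1 - fractal_limit t2)"
    by (intro tendsto_norm tendsto_diff rb_iterate_tendsto t)
  moreover have "\<forall>n. norm (rb_iterate n t1 - rb_iterate n t2) \<le> holder_const * \<bar>t1 - t2\<bar> powr \<sigma>"
    using rb_iterate_invariants t unfolding holder_with_def by blast
  ultimately show "norm (fractal_limit t1 - fractal_limit t2) \<le> holder_const * \<bar>t1 - t2\<bar> powr \<sigma>"
    by (intro LIMSEQ_le_const2) auto
qed

lemma continuous_on_fractal_limit: "continuous_on J fractal_limit"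
  using holder_with_fractal_limit sigma_pos
  by (intro holder_on_imp_continuous_on) (auto simp: holder_with_def holder_on_def)

lemma fractal_eq_fractal_limit: "fractal_eq N x \<alpha> f b fractal_limit"
  unfolding fractal_eq_def
proof (intro ballI)
  fix k t assume k: "k \<in> T" and t: "t \<in> {x k .. x (Suc k)}"
  have "(\<lambda>n. rb_iterate (Suc n) t) \<longlonglongrightarrow> fractal_limit t"
    using rb_iterate_tendsto piece_subset_J k t by (intro LIMSEQ_Suc) blast
  moreover have "rb_iterate (Suc n) t = rb_branch (rb_iterate n) k t" for n
    using rb_operator_eq[OF _ k t] rb_iterate_invariants[of n] by (simp add: rb_iterate_def)
  moreover have "(\<lambda>n. rb_branch (rb_iterate n) k t) \<longlonglongrightarrow> rb_branch fractal_limit k t"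
    unfolding rb_branch_def by (intro tendsto_intros rb_iterate_tendsto P_inv_in_J k t)
  ultimately have "fractal_limit t = rb_branch fractal_limit k t" using LIMSEQ_unique by fastforce
  then show "fractal_limit t = f t + \<alpha> k (P_inv N x k t) * (fractal_limit (P_inv N x k t) - b (P_inv N x k t))"
    by (simp add: rb_branch_def)
qed

lemma fractal_eq_unique:
  assumes h1: "continuous_on J h1" "fractal_eq N x \<alpha> f b h1"
    and h2: "continuous_on J h2" "fractal_eq N x \<alpha> f b h2"
    and t: "t \<in> J"
  shows "h1 t = h2 t"
proof -
  define M where "M = sup_norm_on J (\<lambda>t. h1 t - h2 t)"
  have le_M: "norm (h1 t - h2 t) \<le> M" if "t \<in> J" for t
    unfolding M_def using h1(1) h2(1) compact_J that by (intro norm_le_sup_norm_on continuous_on_diff)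
  have "norm (h1 u - h2 u) \<le> A * M" if u: "u \<in> J" for u
  proof -
    obtain k where k: "k \<in> T" "u \<in> {x k .. x (Suc k)}" using pieces_cover_J[OF u] by blast
    define s where "s = P_inv N x k u"
    have s: "s \<in> J" using P_inv_in_J[OF k] by (simp add: s_def)
    have "h1 u = f u + \<alpha> k s * (h1 s - b s)" "h2 u = f u + \<alpha> k s * (h2 s - b s)"
      using h1(2) h2(2) k unfolding fractal_eq_def s_def by blast+
    then have "h1 u - h2 u = (f u + \<alpha> k s * (h1 s - b s)) - (f u + \<alpha> k s * (h2 s - b s))"
      by simp
    also have "\<dots> = \<alpha> k s * (h1 s - h2 s)" by (simp add: algebra_simps)
    also have "norm \<dots> \<le> A * M"
      unfolding norm_mult using alpha_bound(1) alpha_bound(3)[OF k(1) s] le_M[OF s]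
      by (intro mult_mono) auto
    finally show ?thesis .
  qed
  then have "M \<le> A * M"
    unfolding M_def sup_norm_on_def using endpoints_in_J by (intro cSUP_least) (auto simp: M_def)
  then have "M \<le> 0" using alpha_bound(2) by (simp add: mult_le_cancel_right1)
  then have "norm (h1 t - h2 t) \<le> 0" using le_M[OF t] by linarith
  then show ?thesis by simp
qed

lemma fractal_function_eq_fractal_limit: "fractal_function N x \<alpha> f b = fractal_limit"
  unfolding fractal_function_def
proof (rule the_equality)
  show "continuous_on J fractal_limit \<and> fractal_eq N x \<alpha> f b fractal_limit \<and>
      (\<forall>t. t \<notin> J \<longrightarrow> fractal_limit t = 0)"
    using continuous_on_fractal_limit fractal_eq_fractal_limit by (simp add: fractal_limit_def)
next
  fix h assume h: "continuous_on J h \<and> fractal_eq N x \<alpha> f b h \<and> (\<forall>t. t \<notin> J \<longrightarrow> h t = 0)"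
  show "h = fractal_limit"
  proof
    fix t show "h t = fractal_limit t"
      using fractal_eq_unique[of h fractal_limit t] h continuous_on_fractal_limit fractal_eq_fractal_limit
      by (cases "t \<in> J") (auto simp: fractal_limit_def)
  qed
qed

lemma holder_on_fractal_function: "holder_on \<sigma> J (fractal_function N x \<alpha> f b)"
  using holder_with_fractal_limit
  unfolding fractal_function_eq_fractal_limit holder_with_def holder_on_def by blast

end

theorem mainTheorem7:
  fixes \<sigma> :: real and N :: nat and x :: "nat \<Rightarrow> real"
    and f b :: "real \<Rightarrow> complex" and \<alpha> :: "nat \<Rightarrow> real \<Rightarrow> complex"
  assumes sigma: "0 < \<sigma>" "\<sigma> \<le> 1"
    and N: "N \<ge> 2"
    and incr: "\<And>i j. 1 \<le> i \<Longrightarrow> i < j \<Longrightarrow> j \<le> N \<Longrightarrow> x i < x j"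
    and f_holder: "holder_on \<sigma> (Jint N x) f"
    and b_holder: "holder_on \<sigma> (Jint N x) b"
    and alpha_holder: "\<And>k. k \<in> Tset N \<Longrightarrow> holder_on \<sigma> (Jint N x) (\<alpha> k)"
    and b_left: "b (x 1) = f (x 1)"
    and b_right: "b (x N) = f (x N)"
    and b_ne_f: "\<exists>t\<in>Jint N x. b t \<noteq> f t"
    and alpha_lt1: "\<And>k. k \<in> Tset N \<Longrightarrow> sup_norm_on (Jint N x) (\<alpha> k) < 1"
    and contr: "alpha_holder_norm \<sigma> N x \<alpha> / (Min (a_coef N x ` Tset N)) powr \<sigma> < 1"
  shows "holder_on \<sigma> (Jint N x) (fractal_function N x \<alpha> f b)"
proof -
  interpret ordered_nodes N x using N incr by unfold_locales
  obtain Cf where Cf: "0 \<le> Cf" "\<forall>t1\<in>J. \<forall>t2\<in>J. norm (f t1 - f t2) \<le> Cf * \<bar>t1 - t2\<bar> powr \<sigma>"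
    using holder_on_nonneg_constant[OF f_holder] .
  obtain Cb where Cb: "0 \<le> Cb" "\<forall>t1\<in>J. \<forall>t2\<in>J. norm (b t1 - b t2) \<le> Cb * \<bar>t1 - t2\<bar> powr \<sigma>"
    using holder_on_nonneg_constant[OF b_holder] .
  obtain C\<alpha> where C\<alpha>: "0 \<le> C\<alpha>"
    "\<forall>k\<in>T. \<forall>t1\<in>J. \<forall>t2\<in>J. norm (\<alpha> k t1 - \<alpha> k t2) \<le> C\<alpha> * \<bar>t1 - t2\<bar> powr \<sigma>"
    using holder_on_uniform_constant[OF finite_T alpha_holder] .
  define A where "A = alpha_sup_norm N x \<alpha>"
  define c where "c = Min (a_coef N x ` T)"
  have A_bound: "norm (\<alpha> k t) \<le> A" if "k \<in> T" "t \<in> J" for k t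
    unfolding A_def using that alpha_holder sigma(1)
    by (intro norm_le_alpha_sup_norm holder_on_imp_continuous_on) auto
  have "holder_on \<sigma> J (\<alpha> 1)" using alpha_holder first_and_last_in_T(1) by blast
  then have "A \<le> alpha_holder_norm \<sigma> N x \<alpha>"
    unfolding A_def by (rule alpha_sup_norm_le_alpha_holder_norm[OF first_and_last_in_T(1)])
  then have "A / c powr \<sigma> \<le> alpha_holder_norm \<sigma> N x \<alpha> / c powr \<sigma>"
    by (intro divide_right_mono powr_ge_zero)
  then have contraction: "A / c powr \<sigma> < 1" using contr unfolding c_def by linarith
  have "0 \<le> A" using A_bound[OF first_and_last_in_T(1) endpoints_in_J(1)] by (rule order_trans[OF norm_ge_zero])
  moreover have "A < 1" unfolding A_def using alpha_lt1 by (rule alpha_sup_norm_lt_1)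
  moreover have "0 < c" "\<And>k. k \<in> T \<Longrightarrow> c \<le> a_coef N x k"
    using Min_a_coef_pos Min_a_coef_le by (simp_all add: c_def)
  ultimately interpret fractal_setting N x \<sigma> f b \<alpha> A c Cf Cb C\<alpha>
    using sigma(1) Cf Cb C\<alpha> A_bound contraction b_left b_right by unfold_locales auto
  show ?thesis by (rule holder_on_fractal_function)
qed

end
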